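(* In the finite-sum setting, run Algorithm LCSVRG with parameter $\gamma$ and let $\beta\in(0,2\gamma-L_0)$ be such that $$\tilde L:=\frac{2\gamma-\beta-L_0}{2}-\frac{L_0^2(T-1)}{2\beta b}>0.$$ Then, with $x^{(r,t)}:=x^{rT+t}$, for every epoch $r\ge0$ and every $0\le t<T$, $$\tilde L\sum_{j=0}^t\mathbb{E}\|x^{(r,j+1)}-x^{(r,j)}\|^2\le\mathbb{E}[\psi_0(x^{(r,0)})]-\mathbb{E}[\psi_0(x^{(r,t+1)})].$$
   Context: Problem (P): minimize $\psi_0(x):=f_0(x)+\chi_0(x)$ over $x\in\mathbb{R}^d$ subject to $\psi_i(x):=f_i(x)+\chi_i(x)\le\eta_i$, $i\in[m]:=\{1,\dots,m\}$, with $\chi_0$ proper convex lsc, $\chi_i$ convex continuous on $\mathrm{dom}\,\chi_0$, $f_i$ with $L_i$-Lipschitz gradients, finite optimal value, and nonempty compact feasible set; vector inequalities componentwise. Finite-sum setting: $f_0(x)=\frac1n\sum_{j=1}^nF(x,\xi_j)$ where each $F(\cdot,\xi_j)$ has $L_0$-Lipschitz gradient. Algorithm LCSVRG: given $x^0\in\mathrm{dom}\,\chi_0$, $\eta^0$ with $\psi(x^0)<\eta^0<\eta$, epoch length $T$, batch size $b$, $\gamma>0$. At step $k$: if $k$ is a multiple of $T$, set $G^k=\nabla f_0(x^k)$; otherwise draw a mini-batch $B_k$ of $b$ indices independently and uniformly from $\{1,\dots,n\}$ and set $G^k=\frac1b\sum_{j\in B_k}[\nabla F(x^k,\xi_j)-\nabla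 F(x^{k-1},\xi_j)]+G^{k-1}$. Set $\psi_0^k(x)=\langle G^k,x\rangle+\frac{\gamma}{2}\|x-x^k\|^2+\chi_0(x)$, $\psi_i^k(x)=f_i(x^k)+\langle\nabla f_i(x^k),x-x^k\rangle+\frac{L_i}{2}\|x-x^k\|^2+\chi_i(x)$ ($i\in[m]$), let $x^{k+1}$ minimize $\psi_0^k$ subject to $\psi_i^k(x)\le\eta_i^k$, $i\in[m]$, and set $\eta^{k+1}=\eta^k+\delta^k$ with $\delta^k>0$, $\eta^{k+1}<\eta$. *)

theory Defs
  imports "HOL-Analysis.Analysis" "HOL-Probability.Probability"
begin

text \<open>A sample is a function \<omega>, where \<omega> k l \<in> {0..<n} is the l-th index
  (l < b) of the mini-batch B_k drawn at step k; all indices are drawn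
  independently and uniformly from {0..<n} (the samples xi_1..xi_n are
  re-indexed as 0..n-1). Iterate x^k only depends on \<omega> j for j < k.\<close>
definition lcsvrg_batches :: "nat \<Rightarrow> nat \<Rightarrow> nat \<Rightarrow> (nat \<Rightarrow> nat \<Rightarrow> nat) pmf" where
  "lcsvrg_batches n b K =
     Pi_pmf {..<K} (\<lambda>_. 0) (\<lambda>_. Pi_pmf {..<b} 0 (\<lambda>_. pmf_of_set {..<n}))"

end

theory Submission
  imports Defs
begin

text \<open>
  Every step of LCSVRG minimises a \<open>\<gamma>\<close>-strongly convex model over a convex set. The
  three-point inequality for that subproblem, the quadratic upper bound for \<open>f\<^sub>0\<close> and Young's
  inequality with parameter \<open>\<beta>\<close> give, pathwise,
  \<open>\<psi>\<^sub>0(x\<^sup>k\<^sup>+\<^sup>1) \<le> \<psi>\<^sub>0(x\<^sup>k) - (2\<gamma> - \<beta> - L\<^sub>0)/2 \<parallel>x\<^sup>k\<^sup>+\<^sup>1 - x\<^sup>k\<parallel>\<^sup>2 + \<parallel>G\<^sup>k - \<nabla>f\<^sub>0(x\<^sup>k)\<parallel>\<^sup>2/(2\<beta>)\<close>.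
  Inside an epoch the estimator error is zero at the start, and averaging over the fresh
  mini-batch \<open>B\<^sub>k\<close>, on which nothing before step \<open>k\<close> depends, increases its second moment by at
  most \<open>L\<^sub>0\<^sup>2/b \<cdot> \<bbbE>\<parallel>x\<^sup>k - x\<^sup>k\<^sup>-\<^sup>1\<parallel>\<^sup>2\<close>, since the mini-batch average is an unbiased mean
  of \<open>b\<close> independent terms. Summing the error bound over the at most \<open>T - 1\<close> inner steps and the
  descent inequality over the epoch yields the claim.
\<close>

lemma norm_convex_combination_diff_sq:
  fixes u y c :: "'a::real_inner"
  shows "(norm ((1 - \<tau>) *\<^sub>R u + \<tau> *\<^sub>R y - c))\<^sup>2
       = (1 - \<tau>) * (norm (u - c))\<^sup>2 + \<tau> * (norm (y - c))\<^sup>2 - \<tau> * (1 - \<tau>) * (norm (y - u))\<^sup>2"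
proof -
  have z: "(1 - \<tau>) *\<^sub>R u + \<tau> *\<^sub>R y - c = (u - c) + \<tau> *\<^sub>R ((y - c) - (u - c))"
    by (simp add: algebra_simps)
  have yu: "y - u = (y - c) - (u - c)" by simp
  show ?thesis
    unfolding z yu power2_norm_eq_inner
    by (simp only: inner_add_left inner_add_right inner_diff_left inner_diff_right
        inner_scaleR_left inner_scaleR_right inner_commute[of "y - c" "u - c"])
       (simp add: algebra_simps power2_eq_square)
qed

lemma prox_three_point_inequality:
  fixes \<phi> :: "'a::real_inner \<Rightarrow> real"
  assumes cvx: "convex_on S \<phi>" and "u \<in> S" "y \<in> S"
    and min: "\<And>z. z \<in> S \<Longrightarrow> \<phi> u + \<gamma> / 2 * (norm (u - c))\<^sup>2 \<le> \<phi> z + \<gamma> / 2 * (norm (z - c))\<^sup>2"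
  shows "\<phi> u + \<gamma> / 2 * (norm (u - c))\<^sup>2 + \<gamma> / 2 * (norm (y - u))\<^sup>2 \<le> \<phi> y + \<gamma> / 2 * (norm (y - c))\<^sup>2"
proof -
  \<comment> \<open>Compare \<open>u\<close> with the points of the segment from \<open>u\<close> to \<open>y\<close> and let them tend to \<open>u\<close>.\<close>
  define a where "a = \<phi> y - \<phi> u + \<gamma> / 2 * ((norm (y - c))\<^sup>2 - (norm (u - c))\<^sup>2 - (norm (y - u))\<^sup>2)"
  define B where "B = \<gamma> / 2 * (norm (y - u))\<^sup>2"
  have "0 \<le> a + \<tau> * B" if \<tau>: "0 < \<tau>" "\<tau> < 1" for \<tau>
  proof -
    define z where "z = (1 - \<tau>) *\<^sub>R u + \<tau> *\<^sub>R y"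
    have "z \<in> S"
      using \<tau> assms(2,3) convex_on_imp_convex[OF cvx] unfolding z_def convex_alt by simp
    with min have "\<phi> u + \<gamma> / 2 * (norm (u - c))\<^sup>2 \<le> \<phi> z + \<gamma> / 2 * (norm (z - c))\<^sup>2" .
    also have "\<dots> \<le> (1 - \<tau>) * \<phi> u + \<tau> * \<phi> y + \<gamma> / 2 * ((1 - \<tau>) * (norm (u - c))\<^sup>2
        + \<tau> * (norm (y - c))\<^sup>2 - \<tau> * (1 - \<tau>) * (norm (y - u))\<^sup>2)"
      using convex_onD[OF cvx, of \<tau> u y] \<tau> assms(2,3)
      unfolding z_def norm_convex_combination_diff_sq by simp
    also have "\<dots> = \<phi> u + \<gamma> / 2 * (norm (u - c))\<^sup>2 + \<tau> * (a + \<tau> * B)"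
      unfolding a_def B_def by (simp add: algebra_simps)
    finally have "0 \<le> \<tau> * (a + \<tau> * B)" by simp
    with \<tau> show ?thesis by (simp add: zero_le_mult_iff)
  qed
  then have "\<forall>\<^sub>F \<tau> in at_right 0. 0 \<le> a + \<tau> * B"
    unfolding eventually_at_right_field by (intro exI[of _ 1]) auto
  moreover have "((\<lambda>\<tau>. a + \<tau> * B) \<longlongrightarrow> a) (at_right 0)"
    using tendsto_add[OF tendsto_const tendsto_mult_left_zero[OF tendsto_ident_at, of B]]
    by (simp add: mult.commute)
  ultimately have "0 \<le> a"
    by (intro tendsto_lowerbound[of "\<lambda>\<tau>. a + \<tau> * B" a "at_right (0::real)"]) auto
  then show ?thesis
    unfolding a_def by (simp add: algebra_simps)
qed

lemma convex_on_quadratic_model: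
  fixes r :: "'a::real_inner \<Rightarrow> real"
  assumes "0 \<le> L" "convex_on S r"
  shows "convex_on S (\<lambda>y. a + p \<bullet> (y - c) + L / 2 * (norm (y - c))\<^sup>2 + r y)"
proof (rule convex_onI)
  show "convex S" using convex_on_imp_convex[OF assms(2)] .
  fix \<tau> :: real and u y assume \<tau>: "0 < \<tau>" "\<tau> < 1" and "u \<in> S" "y \<in> S"
  let ?z = "(1 - \<tau>) *\<^sub>R u + \<tau> *\<^sub>R y"
  have "r ?z \<le> (1 - \<tau>) * r u + \<tau> * r y"
    using convex_onD[OF assms(2)] \<tau> \<open>u \<in> S\<close> \<open>y \<in> S\<close> by simp
  moreover have "L / 2 * (norm (?z - c))\<^sup>2 \<le> (1 - \<tau>) * (L / 2 * (norm (u - c))\<^sup>2) + \<tau> * (L / 2 * (norm (y - c))\<^sup>2)"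
  proof -
    have "L / 2 * (norm (?z - c))\<^sup>2 = L / 2 * ((1 - \<tau>) * (norm (u - c))\<^sup>2 + \<tau> * (norm (y - c))\<^sup>2
        - \<tau> * (1 - \<tau>) * (norm (y - u))\<^sup>2)"
      by (simp only: norm_convex_combination_diff_sq)
    also have "\<dots> \<le> L / 2 * ((1 - \<tau>) * (norm (u - c))\<^sup>2 + \<tau> * (norm (y - c))\<^sup>2)"
      using assms(1) \<tau> by (intro mult_left_mono) auto
    also have "\<dots> = (1 - \<tau>) * (L / 2 * (norm (u - c))\<^sup>2) + \<tau> * (L / 2 * (norm (y - c))\<^sup>2)"
      by (simp add: field_simps)
    finally show ?thesis .
  qed
  moreover have "p \<bullet> (?z - c) = (1 - \<tau>) * (p \<bullet> (u - c)) + \<tau> * (p \<bullet> (y - c))"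
    by (simp add: inner_diff_right inner_add_right algebra_simps)
  moreover have "(1 - \<tau>) * (a + p \<bullet> (u - c) + L / 2 * (norm (u - c))\<^sup>2 + r u)
        + \<tau> * (a + p \<bullet> (y - c) + L / 2 * (norm (y - c))\<^sup>2 + r y)
      = a + ((1 - \<tau>) * (p \<bullet> (u - c)) + \<tau> * (p \<bullet> (y - c)))
        + ((1 - \<tau>) * (L / 2 * (norm (u - c))\<^sup>2) + \<tau> * (L / 2 * (norm (y - c))\<^sup>2))
        + ((1 - \<tau>) * r u + \<tau> * r y)"
    by (simp add: algebra_simps)
  ultimately show "a + p \<bullet> (?z - c) + L / 2 * (norm (?z - c))\<^sup>2 + r ?z
      \<le> (1 - \<tau>) * (a + p \<bullet> (u - c) + L / 2 * (norm (u - c))\<^sup>2 + r u)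
        + \<tau> * (a + p \<bullet> (y - c) + L / 2 * (norm (y - c))\<^sup>2 + r y)"
    by linarith
qed

lemma convex_sublevel_sets_Inter:
  assumes "convex S" "\<And>i. i \<in> I \<Longrightarrow> convex_on S (h i)"
  shows "convex {y \<in> S. \<forall>i\<in>I. h i y \<le> \<eta> i}"
proof (rule convexI)
  fix u y :: 'a and s t :: real
  assume u: "u \<in> {y \<in> S. \<forall>i\<in>I. h i y \<le> \<eta> i}" and y: "y \<in> {y \<in> S. \<forall>i\<in>I. h i y \<le> \<eta> i}"
    and st: "0 \<le> s" "0 \<le> t" "s + t = 1"
  have "h i (s *\<^sub>R u + t *\<^sub>R y) \<le> \<eta> i" if "i \<in> I" for i
  proof -
    have "h i (s *\<^sub>R u + t *\<^sub>R y) \<le> s * h i u + t * h i y"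
      using assms(2)[OF that] u y st unfolding convex_on_def by blast
    also have "\<dots> \<le> s * \<eta> i + t * \<eta> i"
      using u y st that by (intro add_mono mult_left_mono) auto
    finally show ?thesis using st by (simp flip: distrib_right)
  qed
  then show "s *\<^sub>R u + t *\<^sub>R y \<in> {y \<in> S. \<forall>i\<in>I. h i y \<le> \<eta> i}"
    using u y st assms(1) by (simp add: convex_def)
qed

lemma prox_gradient_step_descent:
  fixes f r :: "'a::real_inner \<Rightarrow> real"
  assumes "convex_on S r" "c \<in> S" "u \<in> S" "0 < \<beta>"
    and min: "\<And>z. z \<in> S \<Longrightarrow> g \<bullet> u + \<gamma> / 2 * (norm (u - c))\<^sup>2 + r u \<le> g \<bullet> z + \<gamma> / 2 * (norm (z - c))\<^sup>2 + r z"
    and smooth: "f u \<le> f c + p \<bullet> (u - c) + L / 2 * (norm (u - c))\<^sup>2"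
  shows "f u + r u \<le> f c + r c - (2 * \<gamma> - \<beta> - L) / 2 * (norm (u - c))\<^sup>2
           + (norm (g - p))\<^sup>2 / (2 * \<beta>)"
proof -
  have "convex_on S (\<lambda>z. g \<bullet> z + r z)"
    using convex_on_quadratic_model[OF order_refl assms(1), of "g \<bullet> c" g c]
    by (simp add: inner_diff_right)
  then have "(g \<bullet> u + r u) + \<gamma> / 2 * (norm (u - c))\<^sup>2 + \<gamma> / 2 * (norm (c - u))\<^sup>2
      \<le> (g \<bullet> c + r c) + \<gamma> / 2 * (norm (c - c))\<^sup>2"
    using assms(2,3) min by (intro prox_three_point_inequality) (auto simp: algebra_simps)
  then have ru: "r u \<le> r c - g \<bullet> (u - c) - \<gamma> * (norm (u - c))\<^sup>2"
    by (simp add: norm_minus_commute inner_diff_right)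
  \<comment> \<open>Young's inequality absorbs the gradient error into the step length.\<close>
  have "(p - g) \<bullet> (u - c) \<le> (norm (g - p))\<^sup>2 / (2 * \<beta>) + \<beta> / 2 * (norm (u - c))\<^sup>2"
  proof -
    have "(p - g) \<bullet> (u - c) \<le> norm (g - p) * norm (u - c)"
      using norm_cauchy_schwarz[of "p - g" "u - c"] by (simp add: norm_minus_commute)
    also have "\<dots> \<le> (norm (g - p))\<^sup>2 / (2 * \<beta>) + \<beta> / 2 * (norm (u - c))\<^sup>2"
    proof -
      have "0 \<le> (norm (g - p) - \<beta> * norm (u - c))\<^sup>2" by simp
      then have "2 * \<beta> * (norm (g - p) * norm (u - c)) \<le> (norm (g - p))\<^sup>2 + \<beta>\<^sup>2 * (norm (u - c))\<^sup>2"
        by (simp add: power2_diff power_mult_distrib algebra_simps)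
      then show ?thesis
        using \<open>0 < \<beta>\<close> by (simp add: field_simps power2_eq_square)
    qed
    finally show ?thesis .
  qed
  with ru smooth show ?thesis
    by (simp add: inner_diff_left field_simps)
qed

lemma lipschitz_constant_nonneg:
  fixes g :: "'a::euclidean_space \<Rightarrow> 'b::real_normed_vector"
  assumes "\<And>y z. norm (g y - g z) \<le> L * norm (y - z)"
  shows "0 \<le> L"
proof -
  obtain v :: 'a where "v \<in> Basis" using nonempty_Basis by blast
  then have "0 < norm (v - 0)" by (auto simp: nonzero_Basis)
  moreover have "0 \<le> L * norm (v - 0)"
    using assms[of v 0] norm_ge_zero order_trans by blast
  ultimately show ?thesis by (simp add: zero_le_mult_iff)
qed

lemma lipschitz_gradient_upper_bound:
  fixes f :: "'a::real_inner \<Rightarrow> real"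
  assumes der: "\<And>y. (f has_derivative (\<lambda>h. g y \<bullet> h)) (at y)"
    and lip: "\<And>y z. norm (g y - g z) \<le> L * norm (y - z)"
  shows "f y \<le> f x + g x \<bullet> (y - x) + L / 2 * (norm (y - x))\<^sup>2"
proof -
  define d where "d = y - x"
  define \<phi> where "\<phi> s = f (x + s *\<^sub>R d) - s * (g x \<bullet> d) - L / 2 * s\<^sup>2 * (norm d)\<^sup>2" for s
  define \<phi>' where "\<phi>' s = (g (x + s *\<^sub>R d) - g x) \<bullet> d - L * s * (norm d)\<^sup>2" for s
  have "(\<phi> has_real_derivative \<phi>' s) (at s)" for s
  proof -
    have "((\<lambda>s. f (x + s *\<^sub>R d)) has_derivative (\<lambda>h. g (x + s *\<^sub>R d) \<bullet> (h *\<^sub>R d))) (at s)"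
      by (rule has_derivative_compose[OF _ der]) (auto intro!: derivative_eq_intros)
    then have "((\<lambda>s. f (x + s *\<^sub>R d)) has_real_derivative g (x + s *\<^sub>R d) \<bullet> d) (at s)"
      by (simp add: has_field_derivative_def mult_commute_abs)
    then show ?thesis
      unfolding \<phi>_def[abs_def] \<phi>'_def
      by (auto intro!: derivative_eq_intros simp: inner_diff_left)
  qed
  moreover have nonpos: "\<phi>' s \<le> 0" if "0 \<le> s" for s
  proof -
    have "(g (x + s *\<^sub>R d) - g x) \<bullet> d \<le> norm (g (x + s *\<^sub>R d) - g x) * norm d"
      by (rule norm_cauchy_schwarz)
    also have "\<dots> \<le> L * norm (s *\<^sub>R d) * norm d"
      using lip[of "x + s *\<^sub>R d" x] by (intro mult_right_mono) auto
    finally show ?thesis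
      using that by (simp add: \<phi>'_def power2_eq_square mult.assoc)
  qed
  moreover obtain z where "0 < z" "\<phi> 1 - \<phi> 0 = \<phi>' z"
    using MVT2[of 0 1 \<phi> \<phi>'] calculation(1) by auto
  ultimately have "\<phi> 1 \<le> \<phi> 0"
    using nonpos[OF less_imp_le[OF \<open>0 < z\<close>]] by linarith
  then show ?thesis
    by (simp add: \<phi>_def d_def)
qed

lemma gradient_of_average:
  fixes f :: "'a::real_inner \<Rightarrow> real"
  assumes "(f has_derivative (\<lambda>h. g \<bullet> h)) (at y)"
    and "\<And>j. j < n \<Longrightarrow> (F j has_derivative (\<lambda>h. gF j \<bullet> h)) (at y)"
    and "\<And>y. f y = (1 / real n) * (\<Sum>j<n. F j y)"
  shows "g = (1 / real n) *\<^sub>R (\<Sum>j<n. gF j)"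
proof -
  have "f = (\<lambda>y. (1 / real n) * (\<Sum>j<n. F j y))"
    using assms(3) by (rule ext)
  then have "(f has_derivative (\<lambda>h. ((1 / real n) *\<^sub>R (\<Sum>j<n. gF j)) \<bullet> h)) (at y)"
    using assms(2)
    by (auto intro!: derivative_eq_intros simp: inner_sum_left sum_distrib_left)
  with assms(1) have "(\<lambda>h. g \<bullet> h) = (\<lambda>h. ((1 / real n) *\<^sub>R (\<Sum>j<n. gF j)) \<bullet> h)"
    by (rule has_derivative_unique)
  then show ?thesis
    by (metis vector_eq_rdot)
qed

lemma finite_set_pmf_Pi_pmf:
  assumes "finite A" "\<And>i. i \<in> A \<Longrightarrow> finite (set_pmf (p i))"
  shows "finite (set_pmf (Pi_pmf A d p))"
  using assms by (simp add: set_Pi_pmf finite_PiE_dflt)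

lemma expectation_pair_pmf:
  fixes f :: "'a \<times> 'b \<Rightarrow> real"
  assumes A: "finite (set_pmf A)" and B: "finite (set_pmf B)"
  shows "measure_pmf.expectation (pair_pmf A B) f
       = measure_pmf.expectation B (\<lambda>b. measure_pmf.expectation A (\<lambda>a. f (a, b)))"
proof -
  have "measure_pmf.expectation (pair_pmf A B) f = (\<Sum>(a, b)\<in>set_pmf A \<times> set_pmf B. f (a, b) * pmf (pair_pmf A B) (a, b))"
    using A B by (subst integral_measure_pmf_real) (auto simp: case_prod_beta)
  also have "\<dots> = (\<Sum>b\<in>set_pmf B. (\<Sum>a\<in>set_pmf A. f (a, b) * pmf A a) * pmf B b)"
    by (subst sum.cartesian_product[symmetric], subst sum.swap)
       (simp add: pmf_pair sum_distrib_right mult.assoc)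
  also have "\<dots> = measure_pmf.expectation B (\<lambda>b. measure_pmf.expectation A (\<lambda>a. f (a, b)))"
    using A B by (simp add: integral_measure_pmf_real)
  finally show ?thesis .
qed

lemma expectation_Pi_pmf_remove:
  fixes h :: "('i \<Rightarrow> 'b) \<Rightarrow> real"
  assumes A: "finite A" "k \<in> A" and p: "\<And>i. i \<in> A \<Longrightarrow> finite (set_pmf (p i))"
  shows "measure_pmf.expectation (Pi_pmf A d p) h
       = measure_pmf.expectation (Pi_pmf (A - {k}) d p) (\<lambda>\<omega>. measure_pmf.expectation (p k) (\<lambda>c. h (\<omega> (k := c))))"
proof -
  have "Pi_pmf A d p = map_pmf (\<lambda>(c, \<omega>). \<omega> (k := c)) (pair_pmf (p k) (Pi_pmf (A - {k}) d p))"
    using A Pi_pmf_insert[of "A - {k}" k d p] by (simp add: insert_absorb)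
  moreover have "finite (set_pmf (Pi_pmf (A - {k}) d p))"
    using A p by (intro finite_set_pmf_Pi_pmf) auto
  ultimately show ?thesis
    using A p expectation_pair_pmf[of "p k" "Pi_pmf (A - {k}) d p" "\<lambda>x. h ((snd x) (k := fst x))"]
    by (simp add: case_prod_unfold)
qed

lemma expectation_Pi_pmf_mono_conditional:
  fixes h g :: "('i \<Rightarrow> 'b) \<Rightarrow> real"
  assumes A: "finite A" "k \<in> A" and p: "\<And>i. i \<in> A \<Longrightarrow> finite (set_pmf (p i))"
    and cond: "\<And>\<omega>. measure_pmf.expectation (p k) (\<lambda>c. h (\<omega> (k := c))) \<le> g \<omega>"
    and g: "\<And>\<omega> c. g (\<omega> (k := c)) = g \<omega>"
  shows "measure_pmf.expectation (Pi_pmf A d p) h \<le> measure_pmf.expectation (Pi_pmf A d p) g"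
proof -
  have fin: "finite (set_pmf (Pi_pmf (A - {k}) d p))"
    using A p by (intro finite_set_pmf_Pi_pmf) auto
  have "measure_pmf.expectation (Pi_pmf A d p) h
      = measure_pmf.expectation (Pi_pmf (A - {k}) d p) (\<lambda>\<omega>. measure_pmf.expectation (p k) (\<lambda>c. h (\<omega> (k := c))))"
    by (rule expectation_Pi_pmf_remove[OF A p])
  also have "\<dots> \<le> measure_pmf.expectation (Pi_pmf (A - {k}) d p) g"
    by (intro integral_mono integrable_measure_pmf_finite fin cond)
  also have "\<dots> = measure_pmf.expectation (Pi_pmf A d p) g"
    using expectation_Pi_pmf_remove[OF A p, where h = g] by (simp add: g)
  finally show ?thesis .
qed

lemma expectation_norm_sq_add_centered:
  fixes z :: "'b \<Rightarrow> 'a::real_inner"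
  assumes fin: "finite (set_pmf p)" and centered: "\<And>w. measure_pmf.expectation p (\<lambda>c. w \<bullet> z c) = 0"
  shows "measure_pmf.expectation p (\<lambda>c. (norm (w + z c))\<^sup>2)
       = (norm w)\<^sup>2 + measure_pmf.expectation p (\<lambda>c. (norm (z c))\<^sup>2)"
proof -
  have "(norm (w + z c))\<^sup>2 = (norm w)\<^sup>2 + 2 * (w \<bullet> z c) + (norm (z c))\<^sup>2" for c
    by (simp add: dot_norm[of w] field_simps)
  then show ?thesis
    using centered[of w] by (simp add: integrable_measure_pmf_finite[OF fin])
qed

lemma expectation_norm_sq_add_iid_sum:
  fixes z :: "'b \<Rightarrow> 'a::real_inner"
  assumes A: "finite A" and fin: "finite (set_pmf p)"
    and centered: "\<And>w. measure_pmf.expectation p (\<lambda>c. w \<bullet> z c) = 0"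
  shows "measure_pmf.expectation (Pi_pmf A d (\<lambda>_. p)) (\<lambda>\<omega>. (norm (v + (\<Sum>l\<in>A. z (\<omega> l))))\<^sup>2)
       = (norm v)\<^sup>2 + real (card A) * measure_pmf.expectation p (\<lambda>c. (norm (z c))\<^sup>2)"
  using A
proof (induction A rule: finite_induct)
  case (insert k A)
  have sum_upd: "(\<Sum>l\<in>insert k A. z ((\<omega> (k := c)) l)) = (\<Sum>l\<in>A. z (\<omega> l)) + z c" for \<omega> c
  proof -
    have "(\<Sum>l\<in>A. z ((\<omega> (k := c)) l)) = (\<Sum>l\<in>A. z (\<omega> l))"
      using insert.hyps by (intro sum.cong) auto
    with insert.hyps show ?thesis by (simp add: add.commute)
  qed
  have "measure_pmf.expectation (Pi_pmf (insert k A) d (\<lambda>_. p)) (\<lambda>\<omega>. (norm (v + (\<Sum>l\<in>insert k A. z (\<omega> l))))\<^sup>2)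
      = measure_pmf.expectation (Pi_pmf A d (\<lambda>_. p))
          (\<lambda>\<omega>. measure_pmf.expectation p (\<lambda>c. (norm (v + (\<Sum>l\<in>insert k A. z ((\<omega> (k := c)) l))))\<^sup>2))"
    using expectation_Pi_pmf_remove[of "insert k A" k "\<lambda>_. p" d] insert.hyps fin by simp
  also have "\<dots> = measure_pmf.expectation (Pi_pmf A d (\<lambda>_. p))
          (\<lambda>\<omega>. measure_pmf.expectation p (\<lambda>c. (norm ((v + (\<Sum>l\<in>A. z (\<omega> l))) + z c))\<^sup>2))"
    by (simp only: sum_upd add.assoc)
  also have "\<dots> = measure_pmf.expectation (Pi_pmf A d (\<lambda>_. p))
          (\<lambda>\<omega>. (norm (v + (\<Sum>l\<in>A. z (\<omega> l))))\<^sup>2 + measure_pmf.expectation p (\<lambda>c. (norm (z c))\<^sup>2))"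
    by (simp only: expectation_norm_sq_add_centered[OF fin centered])
  also have "\<dots> = (norm v)\<^sup>2 + real (card (insert k A)) * measure_pmf.expectation p (\<lambda>c. (norm (z c))\<^sup>2)"
    using insert fin
    by (subst Bochner_Integration.integral_add)
       (auto intro!: integrable_measure_pmf_finite finite_set_pmf_Pi_pmf simp: algebra_simps)
  finally show ?case .
qed simp

lemma sum_norm_sq_centered:
  fixes w :: "nat \<Rightarrow> 'a::real_inner"
  assumes "n \<ge> 1"
  shows "(\<Sum>i<n. (norm (w i))\<^sup>2)
       = real n * (norm ((1 / real n) *\<^sub>R (\<Sum>j<n. w j)))\<^sup>2
         + (\<Sum>i<n. (norm (w i - (1 / real n) *\<^sub>R (\<Sum>j<n. w j)))\<^sup>2)"
proof -
  define m where "m = (1 / real n) *\<^sub>R (\<Sum>j<n. w j)"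
  have "(\<Sum>i<n. w i - m) = 0"
    using assms by (simp add: m_def sum_subtractf sum_constant_scaleR)
  have "(\<Sum>i<n. (norm (w i))\<^sup>2)
      = (\<Sum>i<n. (norm m)\<^sup>2 + 2 * (m \<bullet> (w i - m)) + (norm (w i - m))\<^sup>2)"
    by (intro sum.cong refl) (simp add: dot_norm[of m] field_simps)
  also have "\<dots> = real n * (norm m)\<^sup>2 + 2 * (m \<bullet> (\<Sum>i<n. w i - m)) + (\<Sum>i<n. (norm (w i - m))\<^sup>2)"
    by (simp add: sum.distrib sum_distrib_left inner_sum_right)
  finally show ?thesis
    using \<open>(\<Sum>i<n. w i - m) = 0\<close> by (simp add: m_def)
qed

lemma expectation_uniform_centered:
  fixes z :: "nat \<Rightarrow> 'a::real_inner"
  assumes "n \<ge> 1" "(\<Sum>i<n. z i) = 0"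
  shows "measure_pmf.expectation (pmf_of_set {..<n}) (\<lambda>i. w \<bullet> z i) = 0"
  using assms by (simp add: integral_pmf_of_set lessThan_empty_iff flip: inner_sum_right)

lemma expectation_minibatch_error:
  fixes w :: "nat \<Rightarrow> 'a::real_inner"
  assumes "n \<ge> 1" "b \<ge> 1"
  shows "measure_pmf.expectation (Pi_pmf {..<b} d (\<lambda>_. pmf_of_set {..<n}))
           (\<lambda>\<omega>. (norm (v + (1 / real b) *\<^sub>R (\<Sum>l<b. w (\<omega> l)) - (1 / real n) *\<^sub>R (\<Sum>i<n. w i)))\<^sup>2)
         \<le> (norm v)\<^sup>2 + (\<Sum>i<n. (norm (w i))\<^sup>2) / (real b * real n)"
proof -
  define mean where "mean = (1 / real n) *\<^sub>R (\<Sum>i<n. w i)"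
  define z where "z i = (1 / real b) *\<^sub>R (w i - mean)" for i
  have sum_z: "(\<Sum>i<n. z i) = 0"
    using assms(1) by (simp add: z_def mean_def sum_subtractf sum_constant_scaleR flip: scaleR_sum_right)
  have fin: "finite (set_pmf (pmf_of_set {..<n}))"
    using assms(1) by (simp add: lessThan_empty_iff)
  have decomp: "v + (1 / real b) *\<^sub>R (\<Sum>l<b. w (\<omega> l)) - mean = v + (\<Sum>l<b. z (\<omega> l))" for \<omega>
    using assms(2) by (simp add: z_def sum_subtractf sum_constant_scaleR scaleR_diff_right flip: scaleR_sum_right)
  have "measure_pmf.expectation (Pi_pmf {..<b} d (\<lambda>_. pmf_of_set {..<n}))
           (\<lambda>\<omega>. (norm (v + (1 / real b) *\<^sub>R (\<Sum>l<b. w (\<omega> l)) - mean))\<^sup>2)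
      = (norm v)\<^sup>2 + real b * measure_pmf.expectation (pmf_of_set {..<n}) (\<lambda>i. (norm (z i))\<^sup>2)"
    unfolding decomp
    using expectation_norm_sq_add_iid_sum[OF _ fin expectation_uniform_centered[OF assms(1) sum_z], of "{..<b}" d v]
    by simp
  also have "\<dots> = (norm v)\<^sup>2 + (\<Sum>i<n. (norm (w i - mean))\<^sup>2) / (real b * real n)"
    using assms by (simp add: integral_pmf_of_set lessThan_empty_iff z_def power_divide
        power2_eq_square flip: sum_divide_distrib)
  also have "\<dots> \<le> (norm v)\<^sup>2 + (\<Sum>i<n. (norm (w i))\<^sup>2) / (real b * real n)"
    using sum_norm_sq_centered[OF assms(1), of w] by (simp add: divide_right_mono mean_def)
  finally show ?thesis
    by (simp add: mean_def)
qed

lemma integrable_lcsvrg_batches: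
  fixes h :: "_ \<Rightarrow> real"
  assumes "n \<ge> 1"
  shows "integrable (measure_pmf (lcsvrg_batches n b K)) h"
  unfolding lcsvrg_batches_def using assms
  by (intro integrable_measure_pmf_finite finite_set_pmf_Pi_pmf) (auto simp: lessThan_empty_iff)

lemma sum_triangular_le:
  fixes a :: "nat \<Rightarrow> real"
  assumes "\<And>i. 0 \<le> a i"
  shows "(\<Sum>j\<le>s. \<Sum>i<j. a i) \<le> real s * (\<Sum>i\<le>s. a i)"
proof (induction s)
  case (Suc s)
  have "(\<Sum>j\<le>Suc s. \<Sum>i<j. a i) = (\<Sum>j\<le>s. \<Sum>i<j. a i) + (\<Sum>i\<le>s. a i)"
    by (simp add: lessThan_Suc_atMost)
  also have "\<dots> \<le> real (Suc s) * (\<Sum>i\<le>s. a i)"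
    using Suc by (simp add: algebra_simps)
  also have "\<dots> \<le> real (Suc s) * (\<Sum>i\<le>Suc s. a i)"
    using assms by (intro mult_left_mono sum_mono2) auto
  finally show ?case .
qed simp

lemma variance_reduced_descent_sum:
  fixes P d e :: "nat \<Rightarrow> real"
  assumes descent: "\<And>j. j \<le> t \<Longrightarrow> P (Suc j) \<le> P j - A * d j + e j / (2 * \<beta>)"
    and e0: "e 0 = 0" and e_step: "\<And>j. j < t \<Longrightarrow> e (Suc j) \<le> e j + c * d j"
    and d: "\<And>j. 0 \<le> d j" and "0 \<le> c" "0 < \<beta>" "t < T"
  shows "(A - c * (real T - 1) / (2 * \<beta>)) * (\<Sum>j\<le>t. d j) \<le> P 0 - P (Suc t)"
proof -
  define S where "S = (\<Sum>j\<le>t. d j)"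
  have e_le: "e j \<le> c * (\<Sum>i<j. d i)" if "j \<le> t" for j
    using that
  proof (induction j)
    case (Suc j)
    then show ?case
      using e_step[of j] by (simp add: algebra_simps)
  qed (simp add: e0)
  have "(\<Sum>j\<le>t. e j) \<le> (\<Sum>j\<le>t. c * (\<Sum>i<j. d i))"
    by (intro sum_mono e_le) simp
  also have "\<dots> = c * (\<Sum>j\<le>t. \<Sum>i<j. d i)"
    by (simp add: sum_distrib_left)
  also have "\<dots> \<le> c * (real t * S)"
    unfolding S_def by (intro mult_left_mono sum_triangular_le d \<open>0 \<le> c\<close>)
  also have "\<dots> \<le> c * (real T - 1) * S"
    using \<open>t < T\<close> \<open>0 \<le> c\<close> sum_nonneg[of "{..t}" d] d
    by (simp add: S_def mult.assoc mult_left_mono mult_right_mono)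
  finally have "(\<Sum>j\<le>t. e j) / (2 * \<beta>) \<le> c * (real T - 1) * S / (2 * \<beta>)"
    using \<open>0 < \<beta>\<close> by (simp add: divide_right_mono)
  moreover have "P (Suc j) \<le> P 0 - A * (\<Sum>i\<le>j. d i) + (\<Sum>i\<le>j. e i) / (2 * \<beta>)" if "j \<le> t" for j
    using that
  proof (induction j)
    case (Suc j)
    then show ?case
      using descent[of "Suc j"] by (simp add: algebra_simps add_divide_distrib)
  qed (use descent in simp)
  ultimately show ?thesis
    by (fastforce simp: S_def algebra_simps)
qed

locale lcsvrg =
  fixes m n b T :: nat
    and D :: "'a::euclidean_space set"
    and f chi :: "nat \<Rightarrow> 'a \<Rightarrow> real"
    and gf :: "nat \<Rightarrow> 'a \<Rightarrow> 'a"
    and L :: "nat \<Rightarrow> real"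
    and gF :: "nat \<Rightarrow> 'a \<Rightarrow> 'a"
    and eta :: "nat \<Rightarrow> nat \<Rightarrow> real"
    and x0 :: 'a
    and \<gamma> :: real
    and x G :: "(nat \<Rightarrow> nat \<Rightarrow> nat) \<Rightarrow> nat \<Rightarrow> 'a"
  assumes chi_convex: "\<And>i. i \<le> m \<Longrightarrow> convex_on D (chi i)"
    and f_grad: "\<And>i y. i \<le> m \<Longrightarrow> (f i has_derivative (\<lambda>h. gf i y \<bullet> h)) (at y)"
    and f_lip: "\<And>i y z. i \<le> m \<Longrightarrow> norm (gf i y - gf i z) \<le> L i * norm (y - z)"
    and gf0_average: "\<And>y. gf 0 y = (1 / real n) *\<^sub>R (\<Sum>j<n. gF j y)"
    and gF_lip: "\<And>j y z. j < n \<Longrightarrow> norm (gF j y - gF j z) \<le> L 0 * norm (y - z)"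
    and n_pos: "n \<ge> 1" and b_pos: "b \<ge> 1" and gamma_pos: "\<gamma> > 0"
    and x0_D: "x0 \<in> D"
    and x0_feasible: "\<And>i. i \<in> {1..m} \<Longrightarrow> f i x0 + chi i x0 \<le> eta 0 i"
    and eta_mono: "\<And>k i. i \<in> {1..m} \<Longrightarrow> eta k i \<le> eta (Suc k) i"
    and x_init: "\<And>\<omega>. x \<omega> 0 = x0"
    and G_full: "\<And>\<omega> k. k mod T = 0 \<Longrightarrow> G \<omega> k = gf 0 (x \<omega> k)"
    and G_vr: "\<And>\<omega> k. k mod T \<noteq> 0 \<Longrightarrow>
        G \<omega> k = (1 / real b) *\<^sub>R (\<Sum>l<b. gF (\<omega> k l) (x \<omega> k) - gF (\<omega> k l) (x \<omega> (k - 1)))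
                 + G \<omega> (k - 1)"
    and x_step: "\<And>\<omega> k.
        x \<omega> (Suc k) \<in> D \<and>
        (\<forall>i\<in>{1..m}. f i (x \<omega> k) + gf i (x \<omega> k) \<bullet> (x \<omega> (Suc k) - x \<omega> k)
                      + L i / 2 * (norm (x \<omega> (Suc k) - x \<omega> k))\<^sup>2 + chi i (x \<omega> (Suc k)) \<le> eta k i) \<and>
        (\<forall>y\<in>D. (\<forall>i\<in>{1..m}. f i (x \<omega> k) + gf i (x \<omega> k) \<bullet> (y - x \<omega> k)
                      + L i / 2 * (norm (y - x \<omega> k))\<^sup>2 + chi i y \<le> eta k i) \<longrightarrow>
           G \<omega> k \<bullet> x \<omega> (Suc k) + \<gamma> / 2 * (norm (x \<omega> (Suc k) - x \<omega> k))\<^sup>2 + chi 0 (x \<omega> (Suc k))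
           \<le> G \<omega> k \<bullet> y + \<gamma> / 2 * (norm (y - x \<omega> k))\<^sup>2 + chi 0 y)"
begin

definition model_feasible :: "nat \<Rightarrow> 'a \<Rightarrow> 'a set" where
  "model_feasible k c = {y \<in> D. \<forall>i\<in>{1..m}.
     f i c + gf i c \<bullet> (y - c) + L i / 2 * (norm (y - c))\<^sup>2 + chi i y \<le> eta k i}"

definition prox_minimizer :: "nat \<Rightarrow> 'a \<Rightarrow> 'a \<Rightarrow> 'a \<Rightarrow> bool" where
  "prox_minimizer k g c u \<longleftrightarrow> u \<in> model_feasible k c \<and>
     (\<forall>y\<in>model_feasible k c. g \<bullet> u + \<gamma> / 2 * (norm (u - c))\<^sup>2 + chi 0 u
                               \<le> g \<bullet> y + \<gamma> / 2 * (norm (y - c))\<^sup>2 + chi 0 y)"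

definition gradient_error :: "(nat \<Rightarrow> nat \<Rightarrow> nat) \<Rightarrow> nat \<Rightarrow> real" where
  "gradient_error \<omega> k = (norm (G \<omega> k - gf 0 (x \<omega> k)))\<^sup>2"

lemma prox_minimizer_iterate: "prox_minimizer k (G \<omega> k) (x \<omega> k) (x \<omega> (Suc k))"
  using x_step[of \<omega> k] by (simp add: prox_minimizer_def model_feasible_def)

lemma convex_model_feasible: "convex (model_feasible k c)"
  unfolding model_feasible_def
proof (rule convex_sublevel_sets_Inter)
  show "convex D"
    using chi_convex[of 0] by (simp add: convex_on_imp_convex)
  show "convex_on D (\<lambda>y. f i c + gf i c \<bullet> (y - c) + L i / 2 * (norm (y - c))\<^sup>2 + chi i y)"
    if "i \<in> {1..m}" for i
    using that lipschitz_constant_nonneg[OF f_lip] chi_convex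
    by (intro convex_on_quadratic_model) auto
qed

lemma iterate_in_D: "x \<omega> k \<in> D"
  using x_step x0_D x_init by (cases k) auto

lemma iterate_model_feasible: "x \<omega> k \<in> model_feasible k (x \<omega> k)"
proof -
  have "f i (x \<omega> k) + chi i (x \<omega> k) \<le> eta k i" if i: "i \<in> {1..m}" for i
  proof (cases k)
    case 0
    then show ?thesis using x0_feasible[OF i] x_init by simp
  next
    case (Suc k')
    let ?u = "x \<omega> k" and ?c = "x \<omega> k'"
    have "f i ?u \<le> f i ?c + gf i ?c \<bullet> (?u - ?c) + L i / 2 * (norm (?u - ?c))\<^sup>2"
      using i by (intro lipschitz_gradient_upper_bound f_grad f_lip) auto
    moreover have "f i ?c + gf i ?c \<bullet> (?u - ?c) + L i / 2 * (norm (?u - ?c))\<^sup>2 + chi i ?u \<le> eta k' i"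
      using x_step[of \<omega> k'] i Suc by auto
    ultimately show ?thesis
      using eta_mono[OF i, of k'] Suc by simp
  qed
  then show ?thesis
    using iterate_in_D by (simp add: model_feasible_def)
qed

lemma prox_minimizer_unique:
  assumes "prox_minimizer k g c u" "prox_minimizer k g c u'"
  shows "u = u'"
proof -
  have "convex_on (model_feasible k c) (\<lambda>y. g \<bullet> y + chi 0 y)"
    using convex_on_quadratic_model[of 0 "model_feasible k c" "chi 0" "g \<bullet> c" g c]
      convex_on_subset[OF chi_convex[of 0]] convex_model_feasible
    by (simp add: model_feasible_def inner_diff_right)
  then have "g \<bullet> v + chi 0 v + \<gamma> / 2 * (norm (v - c))\<^sup>2 + \<gamma> / 2 * (norm (v' - v))\<^sup>2
        \<le> g \<bullet> v' + chi 0 v' + \<gamma> / 2 * (norm (v' - c))\<^sup>2"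
    if "prox_minimizer k g c v" "prox_minimizer k g c v'" for v v'
    using that unfolding prox_minimizer_def
    by (intro prox_three_point_inequality[where S = "model_feasible k c"]) (auto simp: algebra_simps)
  from this[OF assms] this[OF assms(2,1)] have "\<gamma> * (norm (u - u'))\<^sup>2 \<le> 0"
    by (simp add: norm_minus_commute)
  then show ?thesis
    using gamma_pos by (simp add: mult_le_0_iff)
qed

text \<open>
  Redrawing the mini-batch of step \<open>k\<close> changes neither \<open>x\<^sup>j\<close> for \<open>j \<le> k\<close> nor \<open>G\<^sup>j\<close> for \<open>j < k\<close>.
  Since the hypotheses only say that \<open>x\<^sup>k\<^sup>+\<^sup>1\<close> is \<^emph>\<open>a\<close> minimiser of the subproblem, this needs
  its uniqueness.
\<close>

lemma iterate_fun_upd_invariant: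
  "(j \<le> k \<longrightarrow> x (\<omega> (k := c)) j = x \<omega> j) \<and> (j < k \<longrightarrow> G (\<omega> (k := c)) j = G \<omega> j)"
proof (induction j)
  case 0
  show ?case using x_init G_full[of 0] by simp
next
  case (Suc j)
  have x_eq: "x (\<omega> (k := c)) (Suc j) = x \<omega> (Suc j)" if "Suc j \<le> k"
  proof -
    have "x (\<omega> (k := c)) j = x \<omega> j" "G (\<omega> (k := c)) j = G \<omega> j"
      using Suc.IH Suc_leD[OF that] Suc_le_lessD[OF that] by blast+
    with prox_minimizer_iterate[of j "\<omega> (k := c)"] show ?thesis
      by (metis prox_minimizer_iterate prox_minimizer_unique)
  qed
  moreover have "G (\<omega> (k := c)) (Suc j) = G \<omega> (Suc j)" if "Suc j < k"
  proof (cases "Suc j mod T = 0")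
    case True
    then show ?thesis using G_full x_eq that by simp
  next
    case False
    have "x (\<omega> (k := c)) j = x \<omega> j" "G (\<omega> (k := c)) j = G \<omega> j"
      using Suc.IH Suc_lessD[OF that] less_imp_le[OF Suc_lessD[OF that]] by blast+
    then show ?thesis
      using G_vr[OF False] x_eq that by simp
  qed
  ultimately show ?case by blast
qed

lemma iterate_fun_upd: "j \<le> k \<Longrightarrow> x (\<omega> (k := c)) j = x \<omega> j"
  and grad_estimate_fun_upd: "j < k \<Longrightarrow> G (\<omega> (k := c)) j = G \<omega> j"
  using iterate_fun_upd_invariant by blast+

lemma iterate_descent:
  assumes "0 < \<beta>"
  shows "f 0 (x \<omega> (Suc k)) + chi 0 (x \<omega> (Suc k))
      \<le> f 0 (x \<omega> k) + chi 0 (x \<omega> k) - (2 * \<gamma> - \<beta> - L 0) / 2 * (norm (x \<omega> (Suc k) - x \<omega> k))\<^sup>2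
        + gradient_error \<omega> k / (2 * \<beta>)"
  unfolding gradient_error_def
proof (rule prox_gradient_step_descent[where S = "model_feasible k (x \<omega> k)"])
  show "convex_on (model_feasible k (x \<omega> k)) (chi 0)"
    using convex_model_feasible[of k "x \<omega> k"]
    by (intro convex_on_subset[OF chi_convex[of 0]]) (auto simp: model_feasible_def)
  show "f 0 (x \<omega> (Suc k)) \<le> f 0 (x \<omega> k) + gf 0 (x \<omega> k) \<bullet> (x \<omega> (Suc k) - x \<omega> k)
      + L 0 / 2 * (norm (x \<omega> (Suc k) - x \<omega> k))\<^sup>2"
    by (intro lipschitz_gradient_upper_bound f_grad f_lip) auto
qed (use assms iterate_model_feasible prox_minimizer_iterate[of k \<omega>] in \<open>auto simp: prox_minimizer_def\<close>)

lemma gradient_error_conditional_step: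
  assumes "k mod T \<noteq> 0"
  shows "measure_pmf.expectation (Pi_pmf {..<b} 0 (\<lambda>_. pmf_of_set {..<n}))
           (\<lambda>c. gradient_error (\<omega> (k := c)) k)
         \<le> gradient_error \<omega> (k - 1) + (L 0)\<^sup>2 / real b * (norm (x \<omega> k - x \<omega> (k - 1)))\<^sup>2"
proof -
  have "k \<ge> 1" using assms by (cases k) auto
  \<comment> \<open>The new error is the old one plus a centred mini-batch average of the differences \<open>w\<close>.\<close>
  define w where "w i = gF i (x \<omega> k) - gF i (x \<omega> (k - 1))" for i
  define v where "v = G \<omega> (k - 1) - gf 0 (x \<omega> (k - 1))"
  have "G (\<omega> (k := c)) k - gf 0 (x (\<omega> (k := c)) k)
      = v + (1 / real b) *\<^sub>R (\<Sum>l<b. w (c l)) - (1 / real n) *\<^sub>R (\<Sum>i<n. w i)" for c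
    using G_vr[OF assms, of "\<omega> (k := c)"] \<open>k \<ge> 1\<close>
    by (simp add: iterate_fun_upd grad_estimate_fun_upd w_def v_def gf0_average
        sum_subtractf scaleR_diff_right algebra_simps)
  then have "measure_pmf.expectation (Pi_pmf {..<b} 0 (\<lambda>_. pmf_of_set {..<n}))
           (\<lambda>c. gradient_error (\<omega> (k := c)) k)
      \<le> (norm v)\<^sup>2 + (\<Sum>i<n. (norm (w i))\<^sup>2) / (real b * real n)"
    unfolding gradient_error_def using expectation_minibatch_error[OF n_pos b_pos] by simp
  also have "(\<Sum>i<n. (norm (w i))\<^sup>2) \<le> (\<Sum>i<n. (L 0 * norm (x \<omega> k - x \<omega> (k - 1)))\<^sup>2)"
    unfolding w_def using gF_lip by (intro sum_mono power_mono) auto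
  finally show ?thesis
    using n_pos b_pos by (simp add: v_def gradient_error_def divide_right_mono power_mult_distrib)
qed

lemma expected_gradient_error_step:
  assumes "k < K" "k mod T \<noteq> 0"
  shows "measure_pmf.expectation (lcsvrg_batches n b K) (\<lambda>\<omega>. gradient_error \<omega> k)
      \<le> measure_pmf.expectation (lcsvrg_batches n b K) (\<lambda>\<omega>. gradient_error \<omega> (k - 1))
        + (L 0)\<^sup>2 / real b * measure_pmf.expectation (lcsvrg_batches n b K)
            (\<lambda>\<omega>. (norm (x \<omega> k - x \<omega> (k - 1)))\<^sup>2)"
proof -
  have "k \<ge> 1" using assms(2) by (cases k) auto
  have batch_fin: "finite (set_pmf (Pi_pmf {..<b} 0 (\<lambda>_. pmf_of_set {..<n})))"
    using n_pos by (intro finite_set_pmf_Pi_pmf) (auto simp: lessThan_empty_iff)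
  have "measure_pmf.expectation (lcsvrg_batches n b K) (\<lambda>\<omega>. gradient_error \<omega> k)
      \<le> measure_pmf.expectation (lcsvrg_batches n b K)
          (\<lambda>\<omega>. gradient_error \<omega> (k - 1) + (L 0)\<^sup>2 / real b * (norm (x \<omega> k - x \<omega> (k - 1)))\<^sup>2)"
    unfolding lcsvrg_batches_def
  proof (rule expectation_Pi_pmf_mono_conditional)
    show "gradient_error (\<omega> (k := c)) (k - 1) + (L 0)\<^sup>2 / real b * (norm (x (\<omega> (k := c)) k - x (\<omega> (k := c)) (k - 1)))\<^sup>2
        = gradient_error \<omega> (k - 1) + (L 0)\<^sup>2 / real b * (norm (x \<omega> k - x \<omega> (k - 1)))\<^sup>2" for \<omega> c
      using \<open>k \<ge> 1\<close> by (simp add: gradient_error_def iterate_fun_upd grad_estimate_fun_upd)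
  qed (use assms batch_fin gradient_error_conditional_step in auto)
  also have "\<dots> = measure_pmf.expectation (lcsvrg_batches n b K) (\<lambda>\<omega>. gradient_error \<omega> (k - 1))
        + (L 0)\<^sup>2 / real b * measure_pmf.expectation (lcsvrg_batches n b K)
            (\<lambda>\<omega>. (norm (x \<omega> k - x \<omega> (k - 1)))\<^sup>2)"
    by (simp add: integrable_lcsvrg_batches[OF n_pos])
  finally show ?thesis .
qed

lemma epoch_descent:
  fixes \<beta> :: real and r t :: nat
  defines "E \<equiv> \<lambda>h. measure_pmf.expectation (lcsvrg_batches n b (r * T + t + 1)) h"
  assumes "0 < \<beta>" "t < T"
  shows "((2 * \<gamma> - \<beta> - L 0) / 2 - (L 0)\<^sup>2 * (real T - 1) / (2 * \<beta> * real b))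
           * (\<Sum>j\<le>t. E (\<lambda>\<omega>. (norm (x \<omega> (r * T + (j + 1)) - x \<omega> (r * T + j)))\<^sup>2))
         \<le> E (\<lambda>\<omega>. f 0 (x \<omega> (r * T + 0)) + chi 0 (x \<omega> (r * T + 0)))
           - E (\<lambda>\<omega>. f 0 (x \<omega> (r * T + (t + 1))) + chi 0 (x \<omega> (r * T + (t + 1))))"
proof -
  have "((2 * \<gamma> - \<beta> - L 0) / 2 - (L 0)\<^sup>2 / real b * (real T - 1) / (2 * \<beta>))
          * (\<Sum>j\<le>t. E (\<lambda>\<omega>. (norm (x \<omega> (Suc (r * T + j)) - x \<omega> (r * T + j)))\<^sup>2))
        \<le> E (\<lambda>\<omega>. f 0 (x \<omega> (r * T + 0)) + chi 0 (x \<omega> (r * T + 0)))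
          - E (\<lambda>\<omega>. f 0 (x \<omega> (r * T + Suc t)) + chi 0 (x \<omega> (r * T + Suc t)))"
  proof (rule variance_reduced_descent_sum[where e = "\<lambda>j. E (\<lambda>\<omega>. gradient_error \<omega> (r * T + j))"])
    show "E (\<lambda>\<omega>. f 0 (x \<omega> (r * T + Suc j)) + chi 0 (x \<omega> (r * T + Suc j)))
        \<le> E (\<lambda>\<omega>. f 0 (x \<omega> (r * T + j)) + chi 0 (x \<omega> (r * T + j)))
          - (2 * \<gamma> - \<beta> - L 0) / 2 * E (\<lambda>\<omega>. (norm (x \<omega> (Suc (r * T + j)) - x \<omega> (r * T + j)))\<^sup>2)
          + E (\<lambda>\<omega>. gradient_error \<omega> (r * T + j)) / (2 * \<beta>)" for j
    proof -
      have "E (\<lambda>\<omega>. f 0 (x \<omega> (r * T + Suc j)) + chi 0 (x \<omega> (r * T + Suc j)))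
          \<le> E (\<lambda>\<omega>. f 0 (x \<omega> (r * T + j)) + chi 0 (x \<omega> (r * T + j))
                - (2 * \<gamma> - \<beta> - L 0) / 2 * (norm (x \<omega> (Suc (r * T + j)) - x \<omega> (r * T + j)))\<^sup>2
                + gradient_error \<omega> (r * T + j) / (2 * \<beta>))"
        unfolding E_def using iterate_descent[OF \<open>0 < \<beta>\<close>]
        by (intro integral_mono integrable_lcsvrg_batches[OF n_pos]) simp
      then show ?thesis
        unfolding E_def by (simp add: integrable_lcsvrg_batches[OF n_pos])
    qed
    show "E (\<lambda>\<omega>. gradient_error \<omega> (r * T + 0)) = 0"
      by (simp add: E_def gradient_error_def G_full)
    show "E (\<lambda>\<omega>. gradient_error \<omega> (r * T + Suc j))
        \<le> E (\<lambda>\<omega>. gradient_error \<omega> (r * T + j))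
          + (L 0)\<^sup>2 / real b * E (\<lambda>\<omega>. (norm (x \<omega> (Suc (r * T + j)) - x \<omega> (r * T + j)))\<^sup>2)"
      if "j < t" for j
      using expected_gradient_error_step[of "r * T + Suc j" "r * T + t + 1"] that \<open>t < T\<close>
      by (simp add: E_def)
  qed (use \<open>0 < \<beta>\<close> \<open>t < T\<close> in \<open>auto simp: E_def\<close>)
  then show ?thesis
    using \<open>0 < \<beta>\<close> by (simp add: field_simps)
qed

end

theorem mainTheorem14:
  fixes m n b T :: nat
    and D :: "'a::euclidean_space set"
    and f chi :: "nat \<Rightarrow> 'a \<Rightarrow> real"
    and gf :: "nat \<Rightarrow> 'a \<Rightarrow> 'a"
    and L :: "nat \<Rightarrow> real"
    and F :: "nat \<Rightarrow> 'a \<Rightarrow> real"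
    and gF :: "nat \<Rightarrow> 'a \<Rightarrow> 'a"
    and eta_bar :: "nat \<Rightarrow> real"
    and eta :: "nat \<Rightarrow> nat \<Rightarrow> real"
    and x0 :: 'a
    and \<gamma> \<beta> :: real
    and x G :: "(nat \<Rightarrow> nat \<Rightarrow> nat) \<Rightarrow> nat \<Rightarrow> 'a"
    and r t :: nat
  defines "\<psi> \<equiv> (\<lambda>i y. f i y + chi i y)"
  defines "Lt \<equiv> (2 * \<gamma> - \<beta> - L 0) / 2 - (L 0)\<^sup>2 * (real T - 1) / (2 * \<beta> * real b)"
  defines "E \<equiv> (\<lambda>g. measure_pmf.expectation (lcsvrg_batches n b (r * T + t + 1)) g)"
  \<comment> \<open>chi 0 is proper, convex, lsc with effective domain D\<close>
  assumes D_ne: "D \<noteq> {}" and D_convex: "convex D"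
    and chi0_convex: "convex_on D (chi 0)"
    and chi0_lsc: "closed {(y, s). y \<in> D \<and> chi 0 y \<le> s}"
  \<comment> \<open>chi i (i in [m]) convex and continuous on dom chi 0\<close>
    and chi_convex: "\<And>i. i \<in> {1..m} \<Longrightarrow> convex_on D (chi i)"
    and chi_cont: "\<And>i. i \<in> {1..m} \<Longrightarrow> continuous_on D (chi i)"
  \<comment> \<open>f i has L i-Lipschitz gradient gf i\<close>
    and f_grad: "\<And>i y. i \<le> m \<Longrightarrow> (f i has_derivative (\<lambda>h. gf i y \<bullet> h)) (at y)"
    and f_lip: "\<And>i y z. i \<le> m \<Longrightarrow> norm (gf i y - gf i z) \<le> L i * norm (y - z)"
  \<comment> \<open>finite optimal value, nonempty compact feasible set\<close>
    and feas_ne: "{y \<in> D. \<forall>i\<in>{1..m}. \<psi> i y \<le> eta_bar i} \<noteq> {}"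
    and feas_compact: "compact {y \<in> D. \<forall>i\<in>{1..m}. \<psi> i y \<le> eta_bar i}"
    and opt_finite: "bdd_below (\<psi> 0 ` {y \<in> D. \<forall>i\<in>{1..m}. \<psi> i y \<le> eta_bar i})"
  \<comment> \<open>finite-sum setting\<close>
    and n_pos: "n \<ge> 1"
    and f0_sum: "\<And>y. f 0 y = (1 / real n) * (\<Sum>j<n. F j y)"
    and F_grad: "\<And>j y. j < n \<Longrightarrow> (F j has_derivative (\<lambda>h. gF j y \<bullet> h)) (at y)"
    and F_lip: "\<And>j y z. j < n \<Longrightarrow> norm (gF j y - gF j z) \<le> L 0 * norm (y - z)"
  \<comment> \<open>algorithm parameters and initialization\<close>
    and T_pos: "T \<ge> 1" and b_pos: "b \<ge> 1" and gamma_pos: "\<gamma> > 0"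
    and x0_D: "x0 \<in> D"
    and eta0: "\<And>i. i \<in> {1..m} \<Longrightarrow> \<psi> i x0 < eta 0 i \<and> eta 0 i < eta_bar i"
    and eta_step: "\<And>k i. i \<in> {1..m} \<Longrightarrow> eta k i < eta (Suc k) i \<and> eta (Suc k) i < eta_bar i"
    and x_init: "\<And>\<omega>. x \<omega> 0 = x0"
    and G_full: "\<And>\<omega> k. k mod T = 0 \<Longrightarrow> G \<omega> k = gf 0 (x \<omega> k)"
    and G_vr: "\<And>\<omega> k. k mod T \<noteq> 0 \<Longrightarrow>
        G \<omega> k = (1 / real b) *\<^sub>R (\<Sum>l<b. gF (\<omega> k l) (x \<omega> k) - gF (\<omega> k l) (x \<omega> (k - 1)))
                 + G \<omega> (k - 1)"
    and x_step: "\<And>\<omega> k.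
        x \<omega> (Suc k) \<in> D \<and>
        (\<forall>i\<in>{1..m}. f i (x \<omega> k) + gf i (x \<omega> k) \<bullet> (x \<omega> (Suc k) - x \<omega> k)
                      + L i / 2 * (norm (x \<omega> (Suc k) - x \<omega> k))\<^sup>2 + chi i (x \<omega> (Suc k)) \<le> eta k i) \<and>
        (\<forall>y\<in>D. (\<forall>i\<in>{1..m}. f i (x \<omega> k) + gf i (x \<omega> k) \<bullet> (y - x \<omega> k)
                      + L i / 2 * (norm (y - x \<omega> k))\<^sup>2 + chi i y \<le> eta k i) \<longrightarrow>
           G \<omega> k \<bullet> x \<omega> (Suc k) + \<gamma> / 2 * (norm (x \<omega> (Suc k) - x \<omega> k))\<^sup>2 + chi 0 (x \<omega> (Suc k))
           \<le> G \<omega> k \<bullet> y + \<gamma> / 2 * (norm (y - x \<omega> k))\<^sup>2 + chi 0 y)"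
  \<comment> \<open>choice of beta\<close>
    and beta_pos: "0 < \<beta>" and beta_lt: "\<beta> < 2 * \<gamma> - L 0"
    and Lt_pos: "Lt > 0"
  \<comment> \<open>epoch r, inner index t < T\<close>
    and t_lt: "t < T"
  shows "Lt * (\<Sum>j\<le>t. E (\<lambda>\<omega>. (norm (x \<omega> (r * T + (j + 1)) - x \<omega> (r * T + j)))\<^sup>2))
         \<le> E (\<lambda>\<omega>. \<psi> 0 (x \<omega> (r * T + 0))) - E (\<lambda>\<omega>. \<psi> 0 (x \<omega> (r * T + (t + 1))))"
proof -
  have gf0_average: "gf 0 y = (1 / real n) *\<^sub>R (\<Sum>j<n. gF j y)" for y
    using f_grad[of 0 y] F_grad f0_sum by (rule gradient_of_average) auto
  interpret lcsvrg m n b T D f chi gf L gF eta x0 \<gamma> x G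
  proof
    show "convex_on D (chi i)" if "i \<le> m" for i
      using that chi0_convex chi_convex by (cases "i = 0") auto
    show "f i x0 + chi i x0 \<le> eta 0 i" if "i \<in> {1..m}" for i
      using eta0[OF that] by (simp add: \<psi>_def)
    show "eta k i \<le> eta (Suc k) i" if "i \<in> {1..m}" for k i
      using eta_step[OF that, of k] by simp
  qed (use f_grad f_lip gf0_average F_lip n_pos b_pos gamma_pos x0_D x_init G_full G_vr x_step in auto)
  show ?thesis
    using epoch_descent[OF beta_pos t_lt, of r] by (simp add: \<psi>_def Lt_def E_def)
qed

end
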